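(* Let $n\geq 3$, $p,q>0$ with $pq>1$, $\alpha\in(0,n)$ and $\sigma_1,\sigma_2\in[0,\alpha)$, and let $u,v$ be bounded positive solutions of $$u(x)=\int_{\mathbb{R}^n}\frac{v(y)^q}{|x-y|^{n-\alpha}|y|^{\sigma_1}}\,dy,\qquad v(x)=\int_{\mathbb{R}^n}\frac{u(y)^p}{|x-y|^{n-\alpha}|y|^{\sigma_2}}\,dy,\qquad x\in\mathbb{R}^n.$$ Then there exists $C>0$ such that, as $|x|\to\infty$, $$u(x)\geq\frac{C}{(1+|x|)^{n-\alpha}}\quad\text{and}\quad v(x)\geq\frac{C}{(1+|x|)^{\min\{n-\alpha,\ p(n-\alpha)-(\alpha-\sigma_2)\}}}.$$ *)

theory Defs
  imports "HOL-Analysis.Analysis"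
begin

end

theory Submission
  imports Defs
begin

text \<open>All integrands are positive, so the integrals may be restricted to convenient regions.
On the ball of radius 1/2 around a unit vector one has \<open>|x - y| \<le> 4 (1 + |x|) |y|\<close>, which gives
\<open>u(x), v(x) \<ge> c / (1 + |x|) powr (n - \<alpha>)\<close>. Inserting this bound for \<open>u\<close> into the equation
for \<open>v\<close> and restricting to \<open>|y| \<ge> 2|x|\<close>, where \<open>|x - y| \<le> 3|y|/2\<close>, gives
\<open>v(x) \<ge> c\<close> times the integral of \<open>|y| powr (-b)\<close> over \<open>|y| \<ge> 2|x|\<close>, with \<open>b = p (n - \<alpha>) + (n - \<alpha>) + \<sigma>\<^sub>2\<close>.
This tail integral is finite because it is dominated by the integral at \<open>x = 0\<close>, and by scaling
it equals \<open>|x| powr (n - b)\<close> times the tail integral over \<open>|y| \<ge> 2\<close>.\<close>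

lemma nn_integral_lborel_scaleR:
  fixes f :: "'a::euclidean_space \<Rightarrow> ennreal"
  assumes [measurable]: "f \<in> borel_measurable borel" and c: "c \<noteq> 0"
  shows "(\<integral>\<^sup>+x. f x \<partial>lborel) = ennreal (\<bar>c\<bar>^DIM('a)) * (\<integral>\<^sup>+x. f (c *\<^sub>R x) \<partial>lborel)"
  by (subst lborel_affine[OF c, of 0])
     (simp add: nn_integral_density nn_integral_distr nn_integral_cmult ennreal_power)

lemma lborel_integrable_scaleR:
  fixes f :: "'a::euclidean_space \<Rightarrow> real"
  assumes f: "integrable lborel f" and c: "c \<noteq> 0"
  shows "integrable lborel (\<lambda>x. f (c *\<^sub>R x))"
  using f f[THEN borel_measurable_integrable] c unfolding integrable_iff_bounded
  by (subst (asm) nn_integral_lborel_scaleR[where c=c]) (auto simp: ennreal_mult_less_top)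

lemma lborel_integral_scaleR:
  fixes f :: "'a::euclidean_space \<Rightarrow> real"
  assumes f: "integrable lborel f" and c: "c \<noteq> 0"
  shows "(\<integral>x. f x \<partial>lborel) = \<bar>c\<bar>^DIM('a) * (\<integral>x. f (c *\<^sub>R x) \<partial>lborel)"
  using c f f[THEN borel_measurable_integrable] lborel_integrable_scaleR[OF f c]
  by (subst lborel_affine[OF c, of 0]) (simp add: integral_density integral_distr)

lemma integral_pos_if_pos_on_ball:
  fixes f :: "'a::euclidean_space \<Rightarrow> real"
  assumes f: "integrable lborel f" and nonneg: "\<And>y. 0 \<le> f y"
    and pos: "\<And>y. y \<in> ball c r \<Longrightarrow> 0 < f y" and r: "0 < r"
  shows "0 < (\<integral>y. f y \<partial>lborel)"
proof (rule ccontr)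
  have "0 \<le> (\<integral>y. f y \<partial>lborel)"
    using nonneg by simp
  moreover assume "\<not> 0 < (\<integral>y. f y \<partial>lborel)"
  ultimately have "(\<integral>y. f y \<partial>lborel) = 0"
    by simp
  then have "AE y in lborel. f y = 0"
    using integral_nonneg_eq_0_iff_AE[OF f] nonneg by simp
  then have "AE y in lborel. y \<notin> ball c r"
    by eventually_elim (use pos in force)
  then have "emeasure lborel (ball c r) = 0"
    by (subst (asm) AE_iff_measurable[of "ball c r"]) auto
  moreover have "0 < emeasure lborel (ball c r)"
    using emeasure_ball[where c=c and r=r] r by simp
  ultimately show False
    by simp
qed

lemma weighted_potential_integrand_ge_near_unit:
  fixes x y :: "'a::real_normed_vector"
  assumes a: "0 < a" and w: "0 \<le> w" and y: "1/2 \<le> norm y" "norm y \<le> 3/2"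
    and x: "2 \<le> norm x"
  shows "w / (norm y powr a * norm y powr s) / (4 powr a * (1 + norm x) powr a)
    \<le> w / (norm (x - y) powr a * norm y powr s)"
proof -
  have d_pos: "0 < norm (x - y)"
    using norm_triangle_ineq2[of x y] x y by linarith
  have "norm (x - y) \<le> 2 + 2 * norm x"
    using norm_triangle_ineq4[of x y] norm_ge_zero[of x] y by linarith
  also have "\<dots> \<le> 4 * (1 + norm x) * norm y"
    using mult_left_mono[OF y(1), of "4 * (1 + norm x)"] by simp
  finally have "norm (x - y) powr a \<le> (4 * (1 + norm x) * norm y) powr a"
    using a d_pos by (intro powr_mono2) auto
  also have "\<dots> = 4 powr a * (1 + norm x) powr a * norm y powr a"
    using norm_ge_zero[of x] norm_ge_zero[of y]
    by (simp only: powr_mult mult_nonneg_nonneg add_nonneg_nonneg zero_le_one zero_le_numeral)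
  finally have "w / (4 powr a * (1 + norm x) powr a * norm y powr a * norm y powr s)
      \<le> w / (norm (x - y) powr a * norm y powr s)"
    using w d_pos y by (intro divide_left_mono mult_right_mono mult_pos_pos) auto
  then show ?thesis
    by (simp add: mult_ac)
qed

lemma weighted_potential_ge_kernel_decay:
  fixes w :: "'a::euclidean_space \<Rightarrow> real"
  assumes a: "0 < a" and w_pos: "\<And>y. 0 < w y"
    and int: "\<And>x. integrable lborel (\<lambda>y. w y / (norm (x - y) powr a * norm y powr s))"
  shows "\<exists>K>0. \<forall>x. 2 \<le> norm x \<longrightarrow>
     K / (1 + norm x) powr a \<le> (\<integral>y. w y / (norm (x - y) powr a * norm y powr s) \<partial>lborel)"
proof -
  define f where "f x y = w y / (norm (x - y) powr a * norm y powr s)" for x y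
  obtain e :: 'a where e: "norm e = 1"
    using vector_choose_size[of 1] by auto
  define B where "B = ball e (1/2)"
  define F where "F y = f 0 y * indicator B y" for y
  have f_nonneg: "0 \<le> f x y" for x y
    unfolding f_def using w_pos[of y] by simp
  have int_F: "integrable lborel F"
    unfolding F_def f_def B_def by (rule integrable_real_mult_indicator) (use int[of 0] in auto)
  have norm_B: "1/2 \<le> norm y \<and> norm y \<le> 3/2" if "y \<in> B" for y
    using that norm_triangle_ineq2[of e y] norm_triangle_ineq[of e "y - e"] e
    by (auto simp: B_def dist_norm norm_minus_commute)
  have "0 < (\<integral>y. F y \<partial>lborel)"
  proof (rule integral_pos_if_pos_on_ball[OF int_F _ _ zero_less_one[THEN half_gt_zero], of e])
    show "0 \<le> F y" for y
      unfolding F_def using f_nonneg by simp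
    show "0 < F y" if "y \<in> ball e (1/2)" for y
    proof -
      have "y \<in> B" "0 < norm y"
        using that norm_B[of y] by (auto simp: B_def)
      then show ?thesis
        using w_pos[of y] by (simp add: F_def f_def)
    qed
  qed
  then have K_pos: "0 < (\<integral>y. F y \<partial>lborel) / 4 powr a"
    by simp
  have "(\<integral>y. F y \<partial>lborel) / 4 powr a / (1 + norm x) powr a \<le> (\<integral>y. f x y \<partial>lborel)"
    if x: "2 \<le> norm x" for x
  proof -
    define P where "P = 4 powr a * (1 + norm x) powr a"
    have P: "0 < P"
      unfolding P_def using norm_ge_zero[of x] by (simp del: norm_ge_zero)
    have "F y / P \<le> f x y" for y
    proof (cases "y \<in> B")
      case True
      then show ?thesis
        using weighted_potential_integrand_ge_near_unit[OF a less_imp_le[OF w_pos] _ _ x] norm_B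
        by (simp add: F_def f_def P_def)
    next
      case False
      then show ?thesis
        unfolding F_def using f_nonneg P by simp
    qed
    then have "(\<integral>y. F y / P \<partial>lborel) \<le> (\<integral>y. f x y \<partial>lborel)"
      using int_F int[of x] unfolding f_def by (intro integral_mono) auto
    then show ?thesis
      by (simp add: P_def)
  qed
  with K_pos show ?thesis
    unfolding f_def by blast
qed

lemma powr_neg_one_plus_ge:
  fixes t m :: real
  assumes t: "1 \<le> t"
  shows "min 1 (2 powr m) * (1 + t) powr (-m) \<le> t powr (-m)"
proof (cases "0 \<le> m")
  case True
  have "min 1 (2 powr m) * (1 + t) powr (-m) \<le> (1 + t) powr (-m)"
    by (intro mult_left_le_one_le) auto
  also have "\<dots> \<le> t powr (-m)"
    using t True by (intro powr_mono2') auto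
  finally show ?thesis .
next
  case False
  have "min 1 (2 powr m) * (1 + t) powr (-m) \<le> 2 powr m * (1 + t) powr (-m)"
    by (intro mult_right_mono) auto
  also have "\<dots> \<le> 2 powr m * (2 * t) powr (-m)"
    using t False by (intro mult_left_mono powr_mono2) auto
  also have "\<dots> = t powr (-m)"
    using t by (simp add: powr_mult powr_minus)
  finally show ?thesis .
qed

lemma weighted_potential_integrand_ge_power:
  fixes u :: "'a::real_normed_vector \<Rightarrow> real" and x y :: 'a
  assumes a: "0 < a" and p: "0 < p" and K: "0 < K"
    and u_ge: "K / (1 + norm y) powr a \<le> u y"
    and y: "2 \<le> norm y" "2 * norm x \<le> norm y"
  shows "K powr p / (2 powr (a * p) * (3/2) powr a) * norm y powr (-(p * a + a + s))
    \<le> u y powr p / (norm (x - y) powr a * norm y powr s)"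
proof -
  define Y where "Y = norm y"
  have Y: "2 \<le> Y"
    using y by (simp add: Y_def)
  have "K / (2 * Y) powr a \<le> K / (1 + Y) powr a"
    using K Y a by (intro divide_left_mono powr_mono2) auto
  then have "(K / (2 * Y) powr a) powr p \<le> u y powr p"
    using u_ge K Y p by (intro powr_mono2) (auto simp: Y_def)
  then have u_pow: "K powr p / (2 powr (a * p) * Y powr (a * p)) \<le> u y powr p"
    using K Y by (simp add: powr_divide powr_powr powr_mult mult.commute)
  have "norm (x - y) \<le> 3/2 * Y"
    using norm_triangle_ineq4[of x y] y by (simp add: Y_def)
  moreover have d_pos: "0 < norm (x - y)"
    using norm_triangle_ineq2[of y x] y unfolding norm_minus_commute[of y x] by linarith
  ultimately have "norm (x - y) powr a \<le> (3/2 * Y) powr a"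
    using a by (intro powr_mono2) auto
  also have "\<dots> = (3/2) powr a * Y powr a"
    using Y powr_mult[of "3/2" Y a] by (simp del: times_divide_eq_left)
  finally have "norm (x - y) powr a \<le> (3/2) powr a * Y powr a" .
  then have dist_pow: "norm (x - y) powr a * Y powr s \<le> (3/2) powr a * Y powr a * Y powr s"
    by (simp add: mult_right_mono)
  have "Y powr (a * p) * Y powr a * Y powr s = Y powr (p * a + a + s)"
    by (simp add: powr_add[symmetric] algebra_simps)
  then have "Y powr (-(p * a + a + s)) = 1 / (Y powr (a * p) * Y powr a * Y powr s)"
    by (metis powr_minus_divide)
  then have "K powr p / (2 powr (a * p) * (3/2) powr a) * Y powr (-(p * a + a + s))
      = (K powr p / (2 powr (a * p) * Y powr (a * p))) / ((3/2) powr a * Y powr a * Y powr s)"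
    by (simp add: field_simps)
  also have "\<dots> \<le> u y powr p / (norm (x - y) powr a * Y powr s)"
    using u_pow dist_pow d_pos Y by (intro frac_le) auto
  finally show ?thesis
    by (simp add: Y_def)
qed

lemma integrable_power_tail_if_dominated:
  fixes g :: "'a::euclidean_space \<Rightarrow> real"
  assumes g: "integrable lborel g" and c: "0 < c"
    and ge: "\<And>z. r \<le> norm z \<Longrightarrow> c * norm z powr (-b) \<le> g z"
  shows "integrable lborel (\<lambda>z::'a. if r \<le> norm z then norm z powr (-b) else 0)"
proof (rule Bochner_Integration.integrable_bound)
  show "integrable lborel (\<lambda>z. g z / c)"
    using g by simp
  show "(\<lambda>z::'a. if r \<le> norm z then norm z powr (-b) else 0) \<in> borel_measurable lborel"
    by measurable
  show "AE z in lborel. norm (if r \<le> norm z then norm z powr (-b) else 0) \<le> norm (g z / c)"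
    using ge c order.trans[OF _ ge] by (intro AE_I2) (auto simp: field_simps)
qed

lemma integral_power_tail_pos:
  assumes int: "integrable lborel (\<lambda>z::'a::euclidean_space. if r \<le> norm z then norm z powr (-b) else 0)"
  shows "0 < (\<integral>z. (if r \<le> norm (z::'a) then norm z powr (-b) else 0) \<partial>lborel)"
proof -
  obtain e :: 'a where e: "norm e = \<bar>r\<bar> + 1"
    using vector_choose_size[of "\<bar>r\<bar> + 1"] by auto
  show ?thesis
  proof (rule integral_pos_if_pos_on_ball[OF int _ _ zero_less_one, of e])
    show "0 < (if r \<le> norm z then norm z powr (-b) else 0)" if "z \<in> ball e 1" for z
      using that norm_triangle_ineq2[of e z] e by (auto simp: dist_norm)
  qed simp
qed

lemma integral_power_tail_scaleR:
  fixes b r t :: real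
  assumes int: "integrable lborel (\<lambda>z::'a::euclidean_space. if r \<le> norm z then norm z powr (-b) else 0)"
    and t: "0 < t"
  shows "integrable lborel (\<lambda>z::'a. if t * r \<le> norm z then norm z powr (-b) else 0)"
    and "(\<integral>z. (if t * r \<le> norm (z::'a) then norm z powr (-b) else 0) \<partial>lborel)
      = t powr (real DIM('a) - b) * (\<integral>z. (if r \<le> norm (z::'a) then norm z powr (-b) else 0) \<partial>lborel)"
proof -
  let ?T = "\<lambda>r (z::'a). if r \<le> norm z then norm z powr (-b) else 0"
  have scaled: "?T (t * r) = (\<lambda>z. t powr (-b) * ?T r ((1/t) *\<^sub>R z))"
  proof
    fix z :: 'a
    have "t powr (-b) * (norm z / t) powr (-b) = norm z powr (-b)"
      using t powr_mult[of t "norm z / t" "-b"] by simp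
    then show "?T (t * r) z = t powr (-b) * ?T r ((1/t) *\<^sub>R z)"
      using t by (simp add: le_divide_eq mult.commute)
  qed
  show "integrable lborel (?T (t * r))"
    unfolding scaled using lborel_integrable_scaleR[OF int, of "1/t"] t by simp
  have "(\<integral>z. ?T r ((1/t) *\<^sub>R z) \<partial>lborel) = t ^ DIM('a) * (\<integral>z. ?T r z \<partial>lborel)"
    using lborel_integral_scaleR[OF int, of "1/t"] t by (simp add: field_simps power_divide)
  moreover have "t powr (-b) * t ^ DIM('a) = t powr (real DIM('a) - b)"
    using t by (simp add: powr_realpow[symmetric] powr_add[symmetric])
  ultimately show "(\<integral>z. ?T (t * r) z \<partial>lborel) = t powr (real DIM('a) - b) * (\<integral>z. ?T r z \<partial>lborel)"
    unfolding scaled by (simp add: mult.assoc)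
qed

lemma weighted_potential_ge_tail_decay:
  fixes u :: "'a::euclidean_space \<Rightarrow> real"
  assumes a: "0 < a" and p: "0 < p" and K: "0 < K"
    and u_ge: "\<And>y. 2 \<le> norm y \<Longrightarrow> K / (1 + norm y) powr a \<le> u y"
    and int: "\<And>x. integrable lborel (\<lambda>y. u y powr p / (norm (x - y) powr a * norm y powr s))"
  shows "\<exists>C>0. \<forall>x. 1 \<le> norm x \<longrightarrow>
     C / (1 + norm x) powr (p * a + a + s - real DIM('a)) \<le>
       (\<integral>y. u y powr p / (norm (x - y) powr a * norm y powr s) \<partial>lborel)"
proof -
  define f where "f x y = u y powr p / (norm (x - y) powr a * norm y powr s)" for x y
  define b where "b = p * a + a + s"
  define m where "m = b - real DIM('a)"
  define c where "c = K powr p / (2 powr (a * p) * (3/2) powr a)"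
  define G where "G z = (if 2 \<le> norm z then norm z powr (-b) else 0)" for z :: 'a
  have c: "0 < c"
    unfolding c_def using K by simp
  have f_nonneg: "0 \<le> f x y" for x y
    unfolding f_def by simp
  have f_ge: "c * norm y powr (-b) \<le> f x y" if "2 \<le> norm y" "2 * norm x \<le> norm y" for x y
    using weighted_potential_integrand_ge_power[where u=u, OF a p K u_ge[OF that(1)] that]
    unfolding c_def b_def f_def .
  have int_G: "integrable lborel G"
    unfolding G_def using integrable_power_tail_if_dominated[OF int[of 0] c, of 2 b] f_ge[of _ 0]
    by (simp add: f_def)
  have G_int_pos: "0 < (\<integral>z. G z \<partial>lborel)"
    using integral_power_tail_pos[OF int_G[unfolded G_def]] by (simp add: G_def)
  then have C: "0 < c * (\<integral>z. G z \<partial>lborel) * min 1 (2 powr m)"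
    using c by simp
  have "c * (\<integral>z. G z \<partial>lborel) * min 1 (2 powr m) / (1 + norm x) powr m \<le> (\<integral>y. f x y \<partial>lborel)"
    if x: "1 \<le> norm x" for x
  proof -
    define t where "t = norm x"
    have t: "1 \<le> t"
      using x by (simp add: t_def)
    let ?H = "\<lambda>y::'a. if t * 2 \<le> norm y then norm y powr (-b) else 0"
    have "c * ?H y \<le> f x y" for y
      using f_ge[of y x] f_nonneg t by (simp add: t_def)
    then have "(\<integral>y. c * ?H y \<partial>lborel) \<le> (\<integral>y. f x y \<partial>lborel)"
      using integral_power_tail_scaleR(1)[OF int_G[unfolded G_def], of t] int[of x] t
      unfolding f_def by (intro integral_mono) auto
    moreover have "(\<integral>y. c * ?H y \<partial>lborel) = c * (\<integral>z. G z \<partial>lborel) * t powr (-m)"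
      using t by (simp add: integral_power_tail_scaleR(2)[OF int_G[unfolded G_def]] G_def m_def)
    ultimately have "c * (\<integral>z. G z \<partial>lborel) * t powr (-m) \<le> (\<integral>y. f x y \<partial>lborel)"
      by linarith
    moreover have "c * (\<integral>z. G z \<partial>lborel) * (min 1 (2 powr m) * (1 + t) powr (-m))
        \<le> c * (\<integral>z. G z \<partial>lborel) * t powr (-m)"
      using powr_neg_one_plus_ge[OF t] c G_int_pos by (intro mult_left_mono) auto
    ultimately show ?thesis
      by (simp add: t_def powr_minus divide_inverse mult.assoc)
  qed
  with C show ?thesis
    unfolding f_def m_def b_def by blast
qed

theorem proposition2p2:
  fixes u v :: "'a::euclidean_space \<Rightarrow> real"
    and p q \<alpha> \<sigma>1 \<sigma>2 :: real
  assumes dim: "DIM('a) \<ge> 3"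
    and pq: "p > 0" "q > 0" "p * q > 1"
    and alpha: "0 < \<alpha>" "\<alpha> < real DIM('a)"
    and sigma: "0 \<le> \<sigma>1" "\<sigma>1 < \<alpha>" "0 \<le> \<sigma>2" "\<sigma>2 < \<alpha>"
    and pos: "\<And>x. u x > 0" "\<And>x. v x > 0"
    and bdd: "bounded (range u)" "bounded (range v)"
    and int_u: "\<And>x. integrable lborel
        (\<lambda>y. v y powr q / (norm (x - y) powr (real DIM('a) - \<alpha>) * norm y powr \<sigma>1))"
    and eq_u: "\<And>x. u x = (\<integral>y. v y powr q / (norm (x - y) powr (real DIM('a) - \<alpha>) * norm y powr \<sigma>1) \<partial>lborel)"
    and int_v: "\<And>x. integrable lborel
        (\<lambda>y. u y powr p / (norm (x - y) powr (real DIM('a) - \<alpha>) * norm y powr \<sigma>2))"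
    and eq_v: "\<And>x. v x = (\<integral>y. u y powr p / (norm (x - y) powr (real DIM('a) - \<alpha>) * norm y powr \<sigma>2) \<partial>lborel)"
  shows "\<exists>C>0. \<forall>\<^sub>F x in at_infinity.
           u x \<ge> C / (1 + norm x) powr (real DIM('a) - \<alpha>) \<and>
           v x \<ge> C / (1 + norm x) powr (min (real DIM('a) - \<alpha>) (p * (real DIM('a) - \<alpha>) - (\<alpha> - \<sigma>2)))"
proof -
  let ?a = "real DIM('a) - \<alpha>" and ?m = "p * (real DIM('a) - \<alpha>) - (\<alpha> - \<sigma>2)"
  have a: "0 < ?a"
    using alpha by simp
  have "0 < v y powr q" "0 < u y powr p" for y
    using pos[of y] by simp_all
  then obtain K1 K2 where K12: "0 < K1" "0 < K2"
    and u_ge: "\<And>x. 2 \<le> norm x \<Longrightarrow> K1 / (1 + norm x) powr ?a \<le> u x"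
    and v_ge: "\<And>x. 2 \<le> norm x \<Longrightarrow> K2 / (1 + norm x) powr ?a \<le> v x"
    using weighted_potential_ge_kernel_decay[OF a _ int_u] weighted_potential_ge_kernel_decay[OF a _ int_v]
    unfolding eq_u[symmetric] eq_v[symmetric] by metis
  have "p * ?a + ?a + \<sigma>2 - real DIM('a) = ?m"
    by simp
  then obtain K3 where K3: "0 < K3"
    and v_ge_tail: "\<And>x. 1 \<le> norm x \<Longrightarrow> K3 / (1 + norm x) powr ?m \<le> v x"
    using weighted_potential_ge_tail_decay[OF a pq(1) K12(1) u_ge int_v]
    unfolding eq_v[symmetric] by metis
  define C where "C = min K1 (min K2 K3)"
  have weaken: "C / (1 + norm x) powr e \<le> K / (1 + norm x) powr e" if "C \<le> K" for K e and x :: 'a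
    using that by (intro divide_right_mono) auto
  have "u x \<ge> C / (1 + norm x) powr ?a \<and> v x \<ge> C / (1 + norm x) powr (min ?a ?m)"
    if x: "2 \<le> norm x" for x
    using order.trans[OF weaken u_ge[OF x]] order.trans[OF weaken v_ge[OF x]]
      order.trans[OF weaken v_ge_tail[of x]] x
    by (auto simp: C_def min_def)
  then have "\<forall>\<^sub>F x in at_infinity.
      u x \<ge> C / (1 + norm x) powr ?a \<and> v x \<ge> C / (1 + norm x) powr (min ?a ?m)"
    unfolding eventually_at_infinity by blast
  moreover have "0 < C"
    using K12 K3 by (simp add: C_def)
  ultimately show ?thesis
    by blast
qed

end
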